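(* Let $A\in\mathbb{R}^{n\times n}$ and $C\in\mathbb{R}^{p\times n}$ with $C\neq 0$ and $\operatorname{rank} C = p$. Then there exist real matrices $L\in\mathbb{R}^{n\times p}$ and $F\in\mathbb{R}^{n\times p}$ such that the $(n+p)\times(n+p)$ real matrix $$\begin{bmatrix} A - LC & F \\ -C & I_p \end{bmatrix}$$ is Schur stable if and only if the pair $(A,C)$ is detectable.
   Context: A real square matrix is Schur stable if all of its eigenvalues $\lambda\in\mathbb{C}$ satisfy $|\lambda|<1$. The pair $(A,C)$ is detectable if there exists $K\in\mathbb{R}^{n\times p}$ such that $A+KC$ is Schur stable (equivalently, $\operatorname{rank}\begin{bmatrix} C \\ zI_n - A\end{bmatrix} = n$ for every $z\in\mathbb{C}$ with $|z|\ge 1$). Motivation: for the discrete-time system $x(k+1)=Ax(k)+Bu(k)$, $y(k)=Cx(k)$, the system $\hat x(k+1)=(A-LC)\hat x(k)+Ly(k)+Bu(k)+Fv(k)$, $v(k+1)=v(k)+y(k)-C\hat x(k)$ is called a full-order proportional-integral observer exactly when the displayed matrix is Schur stable. *)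

theory Defs
  imports "HOL-Analysis.Analysis"
begin

definition cmat :: "real^'n^'m \<Rightarrow> complex^'n^'m" where
  "cmat A = (\<chi> i j. complex_of_real (A $ i $ j))"

definition schur_stable :: "real^'n^'n \<Rightarrow> bool" where
  "schur_stable A \<longleftrightarrow>
     (\<forall>z::complex. (\<exists>v::complex^'n. v \<noteq> 0 \<and> cmat A *v v = z *s v) \<longrightarrow> norm z < 1)"

definition detectable :: "real^'n^'n \<Rightarrow> real^'n^'p \<Rightarrow> bool" where
  "detectable A C \<longleftrightarrow> (\<exists>K::real^'p^'n. schur_stable (A + K ** C))"

definition pi_block :: "real^'n^'n \<Rightarrow> real^'n^'p \<Rightarrow> real^'p^'n \<Rightarrow> real^'p^'n
    \<Rightarrow> real^('n + 'p)^('n + 'p)" where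
  "pi_block A C L F = (\<chi> i j. case (i, j) of
       (Inl a, Inl b) \<Rightarrow> (A - L ** C) $ a $ b
     | (Inl a, Inr b) \<Rightarrow> F $ a $ b
     | (Inr a, Inl b) \<Rightarrow> - (C $ a $ b)
     | (Inr a, Inr b) \<Rightarrow> (mat 1 :: real^'p^'p) $ a $ b)"

end

theory Submission
  imports Defs Jordan_Normal_Form.Spectral_Radius
begin

text \<open>
Sufficiency: for a stabilising gain \<open>K\<close> and a right inverse \<open>R\<close> of \<open>C\<close> (which exists since \<open>C\<close>
has full row rank) take \<open>L = R - K\<close> and \<open>F = -(A - L C) R\<close>. If \<open>(x, y)\<close> is an eigenvector of the
block matrix for \<open>\<lambda>\<close>, then \<open>x - R y\<close> is an eigenvector of \<open>A + K C\<close> for \<open>\<lambda>\<close>, unless it vanishes, in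
which case \<open>\<lambda> = 0\<close>.

Necessity: the powers of a Schur stable matrix \<open>M\<close> decay geometrically (by the Jordan normal form
bound for spectral radius \<open>< 1\<close>), so \<open>P = \<Sum>\<^sub>k (M\<^sup>k)\<^sup>T M\<^sup>k\<close> is a Lyapunov matrix:
\<open>(M x)\<^sup>T P (M x) = x\<^sup>T P x - |x|\<^sup>2\<close>. For the block matrix, \<open>(w, 0) \<mapsto> (A w, 0)\<close> whenever \<open>C w = 0\<close>, so the
upper left block \<open>P\<^sub>1\<^sub>1\<close> of \<open>P\<close> decreases along \<open>A\<close> on the kernel of \<open>C\<close>. Choosing a right inverse \<open>N\<close>
of \<open>C\<close> whose range is \<open>P\<^sub>1\<^sub>1\<close>-orthogonal to that kernel, \<open>I - N C\<close> is a \<open>P\<^sub>1\<^sub>1\<close>-contraction onto it,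
and the form strictly decreases along \<open>A + K C = A (I - N C)\<close> for \<open>K = - A N\<close>, which keeps every
eigenvalue of \<open>A + K C\<close> inside the unit disc.
\<close>

(* Jordan_Normal_Form reuses these names and symbols for its own vectors and matrices. *)
no_notation Matrix.vec_index (infixl "$" 100)
no_notation Matrix.scalar_prod (infix "\<bullet>" 70)
hide_const (open) Matrix.mat Matrix.vec Matrix.row

lemma matrix_diff_rdistrib:
  fixes A B :: "'a::ring_1^'n^'m"
  shows "(A - B) ** C = A ** C - B ** C"
  by (simp add: matrix_matrix_mult_def Finite_Cartesian_Product.vec_eq_iff sum_subtractf left_diff_distrib)

lemma matrix_diff_ldistrib:
  fixes A :: "'a::ring_1^'n^'m"
  shows "A ** (B - C) = A ** B - A ** C"
  by (simp add: matrix_matrix_mult_def Finite_Cartesian_Product.vec_eq_iff sum_subtractf right_diff_distrib)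

lemma matrix_neg_mult:
  fixes A :: "'a::ring_1^'n^'m"
  shows "- A ** B = - (A ** B)"
  by (simp add: matrix_matrix_mult_def Finite_Cartesian_Product.vec_eq_iff sum_negf)

lemma matrix_neg_vector_mult:
  fixes A :: "'a::ring_1^'n^'m"
  shows "- A *v x = - (A *v x)"
  by (simp add: matrix_vector_mult_def Finite_Cartesian_Product.vec_eq_iff sum_negf)

lemma matrix_vector_mult_neg:
  fixes A :: "'a::ring_1^'n^'m"
  shows "A *v - x = - (A *v x)"
  by (simp add: matrix_vector_mult_def Finite_Cartesian_Product.vec_eq_iff sum_negf)

lemma right_inverse_of_ker_trivial:
  fixes M :: "'a::field^'n^'n"
  assumes "\<And>x. M *v x = 0 \<Longrightarrow> x = 0"
  obtains B where "M ** B = mat 1"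
  using assms matrix_left_invertible_ker matrix_left_right_inverse by metis

lemma full_row_rank_right_inverse:
  fixes C :: "real^'n^'p"
  assumes "rank C = CARD('p)"
  obtains R where "C ** R = mat 1"
  using assms full_rank_surjective matrix_right_invertible_surjective by metis

lemma cmat_matrix_mult: "cmat (A ** B) = cmat A ** cmat B"
  by (simp add: cmat_def matrix_matrix_mult_def Finite_Cartesian_Product.vec_eq_iff)

lemma cmat_add: "cmat (A + B) = cmat A + cmat B"
  by (simp add: cmat_def Finite_Cartesian_Product.vec_eq_iff)

lemma cmat_uminus: "cmat (- A) = - cmat A"
  by (simp add: cmat_def Finite_Cartesian_Product.vec_eq_iff)

lemma cmat_mat_1: "cmat (mat 1) = mat 1"
  by (simp add: cmat_def Finite_Cartesian_Product.vec_eq_iff Finite_Cartesian_Product.mat_def)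

lemma cmat_scaleR_mult: "cmat (c *\<^sub>R M) *v v = complex_of_real c *s (cmat M *v v)"
  by (simp add: Finite_Cartesian_Product.vec_eq_iff matrix_vector_mult_def cmat_def sum_distrib_left mult_ac)

definition vec_Re :: "complex^'n \<Rightarrow> real^'n" where
  "vec_Re v = (\<chi> i. Re (v $ i))"

definition vec_Im :: "complex^'n \<Rightarrow> real^'n" where
  "vec_Im v = (\<chi> i. Im (v $ i))"

lemma vec_Re_cmat_mult: "vec_Re (cmat A *v v) = A *v vec_Re v"
  by (simp add: vec_Re_def cmat_def matrix_vector_mult_def Finite_Cartesian_Product.vec_eq_iff)

lemma vec_Im_cmat_mult: "vec_Im (cmat A *v v) = A *v vec_Im v"
  by (simp add: vec_Im_def cmat_def matrix_vector_mult_def Finite_Cartesian_Product.vec_eq_iff)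

lemma vec_Re_scale: "vec_Re (z *s v) = Re z *\<^sub>R vec_Re v - Im z *\<^sub>R vec_Im v"
  by (simp add: vec_Re_def vec_Im_def Finite_Cartesian_Product.vec_eq_iff)

lemma vec_Im_scale: "vec_Im (z *s v) = Im z *\<^sub>R vec_Re v + Re z *\<^sub>R vec_Im v"
  by (simp add: vec_Re_def vec_Im_def Finite_Cartesian_Product.vec_eq_iff)

lemma vec_Re_Im_eq_0_iff: "vec_Re v = 0 \<and> vec_Im v = 0 \<longleftrightarrow> v = 0"
  by (auto simp: vec_Re_def vec_Im_def Finite_Cartesian_Product.vec_eq_iff complex_eq_iff)

section \<open>Stability from a decreasing quadratic form\<close>

lemma quadratic_form_rotation:
  fixes P :: "real^'n^'n"
  assumes "b \<bullet> (P *v a) = a \<bullet> (P *v b)"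
  shows "(s *\<^sub>R a - t *\<^sub>R b) \<bullet> (P *v (s *\<^sub>R a - t *\<^sub>R b))
       + (t *\<^sub>R a + s *\<^sub>R b) \<bullet> (P *v (t *\<^sub>R a + s *\<^sub>R b))
       = (s\<^sup>2 + t\<^sup>2) * (a \<bullet> (P *v a) + b \<bullet> (P *v b))"
  using assms by (simp add: algebra_simps inner_add_left inner_add_right inner_diff_left
      inner_diff_right power2_eq_square)

lemma schur_stable_of_quadratic_decrease:
  fixes B P :: "real^'n^'n" and T :: "real^'n^'m"
  assumes sym: "\<And>x y. x \<bullet> (P *v y) = y \<bullet> (P *v x)"
    and nonneg: "\<And>x. 0 \<le> x \<bullet> (P *v x)"
    and decrease: "\<And>x. (B *v x) \<bullet> (P *v (B *v x)) \<le> x \<bullet> (P *v x) - (T *v x) \<bullet> (T *v x)"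
    and ker: "\<And>x. T *v x = 0 \<Longrightarrow> B *v x = 0"
  shows "schur_stable B"
  unfolding schur_stable_def
proof (intro allI impI)
  fix z :: complex
  assume "\<exists>v. v \<noteq> 0 \<and> cmat B *v v = z *s v"
  then obtain v where "v \<noteq> 0" and ev: "cmat B *v v = z *s v" by blast
  define a b where "a = vec_Re v" and "b = vec_Im v"
  define q where "q x = x \<bullet> (P *v x)" for x
  have Ba: "B *v a = Re z *\<^sub>R a - Im z *\<^sub>R b" and Bb: "B *v b = Im z *\<^sub>R a + Re z *\<^sub>R b"
    using arg_cong[OF ev, of vec_Re] arg_cong[OF ev, of vec_Im]
    by (simp_all add: a_def b_def vec_Re_cmat_mult vec_Im_cmat_mult vec_Re_scale vec_Im_scale)
  show "norm z < 1"
  proof (rule ccontr)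
    assume "\<not> norm z < 1"
    hence z1: "1 \<le> (Re z)\<^sup>2 + (Im z)\<^sup>2"
      by (simp add: cmod_power2[symmetric] one_le_power)
    have "((Re z)\<^sup>2 + (Im z)\<^sup>2) * (q a + q b) = q (B *v a) + q (B *v b)"
      unfolding Ba Bb q_def by (rule quadratic_form_rotation[symmetric]) (rule sym)
    also have "\<dots> \<le> q a + q b - ((T *v a) \<bullet> (T *v a) + (T *v b) \<bullet> (T *v b))"
      using decrease[of a] decrease[of b] unfolding q_def by simp
    finally have "(T *v a) \<bullet> (T *v a) + (T *v b) \<bullet> (T *v b)
        \<le> (1 - ((Re z)\<^sup>2 + (Im z)\<^sup>2)) * (q a + q b)"
      by (simp add: algebra_simps)
    also have "\<dots> \<le> 0"
      using z1 nonneg[of a] nonneg[of b] unfolding q_def by (intro mult_nonpos_nonneg) auto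
    finally have "T *v a = 0" "T *v b = 0"
      by (smt (verit) inner_ge_zero inner_eq_zero_iff)+
    hence "vec_Re (cmat B *v v) = 0 \<and> vec_Im (cmat B *v v) = 0"
      using ker by (simp add: a_def b_def vec_Re_cmat_mult vec_Im_cmat_mult)
    hence "z *s v = 0" using ev vec_Re_Im_eq_0_iff by metis
    hence "z = 0" using \<open>v \<noteq> 0\<close> by simp
    with z1 show False by simp
  qed
qed

lemma right_inverse_orthogonal_to_kernel:
  fixes C :: "real^'n^'p" and P :: "real^'n^'n"
  assumes rank: "rank C = CARD('p)"
    and posdef: "\<And>x. x \<noteq> 0 \<Longrightarrow> 0 < x \<bullet> (P *v x)"
  obtains N where "C ** N = mat 1" and "\<And>w y. C *v w = 0 \<Longrightarrow> w \<bullet> (P *v (N *v y)) = 0"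
proof -
  have ker_P: "P *v x = 0 \<Longrightarrow> x = 0" for x
    using posdef[of x] by fastforce
  obtain Q where PQ: "P ** Q = mat 1"
    using right_inverse_of_ker_trivial ker_P by blast
  have inj_CT: "inj ((*v) (transpose C))"
    using rank rank_transpose full_rank_injective by metis
  define G where "G = C ** Q ** transpose C"
  have "y = 0" if "G *v y = 0" for y
  proof -
    define u where "u = transpose C *v y"
    define t where "t = Q *v u"
    have Pt: "P *v t = u"
      unfolding t_def by (simp add: matrix_vector_mul_assoc PQ)
    have "t \<bullet> (P *v t) = u \<bullet> t"
      by (simp add: Pt inner_commute)
    also have "\<dots> = y \<bullet> (C *v t)"
      unfolding u_def by (simp add: dot_lmul_matrix)
    also have "\<dots> = y \<bullet> (G *v y)"
      unfolding G_def t_def u_def by (simp flip: matrix_vector_mul_assoc)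
    finally have "t \<bullet> (P *v t) = 0" using that by simp
    hence "t = 0" using posdef[of t] by fastforce
    hence "transpose C *v y = 0" using Pt u_def by simp
    thus "y = 0" using inj_CT by (metis inj_eq matrix_vector_mult_0_right)
  qed
  then obtain Gi where GGi: "G ** Gi = mat 1"
    using right_inverse_of_ker_trivial by blast
  define N where "N = Q ** transpose C ** Gi"
  show ?thesis
  proof
    show "C ** N = mat 1"
      using GGi unfolding N_def G_def by (simp add: matrix_mul_assoc)
    show "w \<bullet> (P *v (N *v y)) = 0" if "C *v w = 0" for w y
    proof -
      have "P *v (N *v y) = transpose C *v (Gi *v y)"
        unfolding N_def by (simp add: matrix_vector_mul_assoc matrix_mul_assoc PQ)
      thus ?thesis
        using that by (metis dot_lmul_matrix inner_commute inner_zero_right transpose_matrix_vector)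
    qed
  qed
qed

lemma detectable_of_lyapunov_on_kernel:
  fixes A P :: "real^'n^'n" and C :: "real^'n^'p"
  assumes rank: "rank C = CARD('p)"
    and sym: "\<And>x y. x \<bullet> (P *v y) = y \<bullet> (P *v x)"
    and ge: "\<And>x. x \<bullet> x \<le> x \<bullet> (P *v x)"
    and decrease: "\<And>w. C *v w = 0 \<Longrightarrow> (A *v w) \<bullet> (P *v (A *v w)) \<le> w \<bullet> (P *v w) - w \<bullet> w"
  shows "detectable A C"
proof -
  define q where "q x = x \<bullet> (P *v x)" for x
  have nonneg: "0 \<le> q x" for x
    using ge[of x] unfolding q_def by (meson inner_ge_zero order_trans)
  have q_add: "q (w + d) = q w + 2 * (w \<bullet> (P *v d)) + q d" for w d
    using sym[of d w] by (simp add: q_def algebra_simps inner_add_left inner_add_right)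
  have "0 < q x" if "x \<noteq> 0" for x
    using ge[of x] that unfolding q_def by (meson inner_gt_zero_iff order_less_le_trans)
  then obtain N where CN: "C ** N = mat 1"
    and orth: "\<And>w y. C *v w = 0 \<Longrightarrow> w \<bullet> (P *v (N *v y)) = 0"
    using right_inverse_orthogonal_to_kernel[OF rank] unfolding q_def by blast
  \<comment> \<open>\<open>Pi\<close> is the \<open>P\<close>-orthogonal projection onto the kernel of \<open>C\<close>.\<close>
  define Pi where "Pi = mat 1 - N ** C"
  have C_Pi: "C *v (Pi *v x) = 0" for x
  proof -
    have "C ** Pi = 0"
      unfolding Pi_def by (simp add: matrix_diff_ldistrib matrix_mul_assoc CN)
    thus ?thesis by (simp add: matrix_vector_mul_assoc)
  qed
  have q_Pi: "q (Pi *v x) \<le> q x" for x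
  proof -
    define d where "d = N *v (C *v x)"
    have x: "x = Pi *v x + d"
      unfolding Pi_def d_def by (simp add: matrix_vector_mult_diff_rdistrib matrix_vector_mul_assoc)
    have "q x = q (Pi *v x) + 2 * ((Pi *v x) \<bullet> (P *v d)) + q d"
      using q_add x by metis
    thus ?thesis using orth[OF C_Pi] nonneg[of d] unfolding d_def by simp
  qed
  have "schur_stable (A ** Pi)"
  proof (rule schur_stable_of_quadratic_decrease[OF sym, where T = Pi])
    show "0 \<le> x \<bullet> (P *v x)" for x using nonneg unfolding q_def .
    show "((A ** Pi) *v x) \<bullet> (P *v ((A ** Pi) *v x)) \<le> x \<bullet> (P *v x) - (Pi *v x) \<bullet> (Pi *v x)" for x
      using decrease[OF C_Pi[of x]] q_Pi[of x] unfolding q_def by (simp flip: matrix_vector_mul_assoc)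
    show "Pi *v x = 0 \<Longrightarrow> (A ** Pi) *v x = 0" for x
      by (simp flip: matrix_vector_mul_assoc)
  qed
  moreover have "A ** Pi = A + (- (A ** N)) ** C"
    unfolding Pi_def by (simp add: matrix_diff_ldistrib matrix_neg_mult matrix_mul_assoc)
  ultimately show ?thesis unfolding detectable_def by metis
qed

section \<open>Lyapunov matrices of Schur stable matrices\<close>

fun matpow :: "'a::semiring_1^'m^'m \<Rightarrow> nat \<Rightarrow> 'a^'m^'m" where
  "matpow M 0 = mat 1"
| "matpow M (Suc k) = M ** matpow M k"

lemma matpow_Suc_right: "matpow M (Suc k) = matpow M k ** M"
  by (induction k) (simp_all, metis matrix_mul_assoc)

lemma matpow_scaleR: "matpow (c *\<^sub>R M) k = c ^ k *\<^sub>R matpow (M :: real^'m^'m) k"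
  by (induction k) (simp_all add: scalar_matrix_assoc[symmetric] matrix_scalar_ac)

lemma inner_matrix_vector_mult_sum:
  "x \<bullet> (P *v y) = (\<Sum>i\<in>UNIV. \<Sum>j\<in>UNIV. x $ i * y $ j * P $ i $ j)" for P :: "real^'m^'m"
  by (simp add: inner_vec_def matrix_vector_mult_def sum_distrib_left mult_ac)

lemma inner_matrix_vector_mult_both: "(B *v x) \<bullet> (B *v y) = x \<bullet> ((transpose B ** B) *v y)"
  for B :: "real^'m^'n"
  by (metis dot_lmul_matrix matrix_vector_mul_assoc vector_transpose_matrix)

lemma summable_matpow_entry_products:
  fixes M :: "real^'m^'m"
  assumes r: "0 < r" "r < 1" and bound: "\<And>k i j. \<bar>matpow M k $ i $ j\<bar> \<le> c * r ^ k"
  shows "summable (\<lambda>k. matpow M k $ l $ i * matpow M k $ l $ j)"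
proof (rule summable_comparison_test')
  have "r * r < 1 * 1" using r by (intro mult_strict_mono) auto
  thus "summable (\<lambda>k. c * c * (r * r) ^ k)"
    using r by (intro summable_mult summable_geometric) simp
  show "norm (matpow M k $ l $ i * matpow M k $ l $ j) \<le> c * c * (r * r) ^ k" for k
  proof -
    have "norm (matpow M k $ l $ i * matpow M k $ l $ j) \<le> (c * r ^ k) * (c * r ^ k)"
      unfolding real_norm_def abs_mult using bound[of k l i] bound[of k l j]
      by (intro mult_mono) auto
    thus ?thesis by (simp add: power_mult_distrib mult_ac)
  qed
qed

\<comment> \<open>\<open>P = \<Sum>\<^sub>k (M\<^sup>k)\<^sup>T M\<^sup>k\<close>: the quadratic form \<open>x\<^sup>T P x = \<Sum>\<^sub>k |M\<^sup>k x|\<^sup>2\<close> drops by \<open>|x|\<^sup>2\<close> under \<open>M\<close>.\<close>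
lemma lyapunov_matrix_of_geometric_decay:
  fixes M :: "real^'m^'m"
  assumes r: "0 < r" "r < 1" and bound: "\<And>k i j. \<bar>matpow M k $ i $ j\<bar> \<le> c * r ^ k"
  obtains P where "\<And>x y. x \<bullet> (P *v y) = y \<bullet> (P *v x)" and "\<And>x. x \<bullet> x \<le> x \<bullet> (P *v x)"
    and "\<And>x. (M *v x) \<bullet> (P *v (M *v x)) = x \<bullet> (P *v x) - x \<bullet> x"
proof -
  define G where "G k = transpose (matpow M k) ** matpow M k" for k
  have "summable (\<lambda>k. G k $ i $ j)" for i j
    unfolding G_def matrix_matrix_mult_def transpose_def
    by (simp add: summable_sum summable_matpow_entry_products[OF r bound])
  define P :: "real^'m^'m" where "P = (\<chi> i j. \<Sum>k. G k $ i $ j)"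
  define f where "f x y k = (matpow M k *v x) \<bullet> (matpow M k *v y)" for x y k
  have f_sums: "f x y sums (x \<bullet> (P *v y))" for x y
  proof -
    have "f x y k = x \<bullet> (G k *v y)" for k
      unfolding f_def G_def by (rule inner_matrix_vector_mult_both)
    hence "f x y = (\<lambda>k. \<Sum>i\<in>UNIV. \<Sum>j\<in>UNIV. x $ i * y $ j * G k $ i $ j)"
      by (simp add: fun_eq_iff inner_matrix_vector_mult_sum)
    moreover have "(\<lambda>k. \<Sum>i\<in>UNIV. \<Sum>j\<in>UNIV. x $ i * y $ j * G k $ i $ j)
        sums (\<Sum>i\<in>UNIV. \<Sum>j\<in>UNIV. x $ i * y $ j * P $ i $ j)"
      unfolding P_def using \<open>\<And>i j. summable (\<lambda>k. G k $ i $ j)\<close>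
      by (intro sums_sum sums_mult) (simp add: summable_sums)
    ultimately show ?thesis by (simp add: inner_matrix_vector_mult_sum)
  qed
  have sym: "x \<bullet> (P *v y) = y \<bullet> (P *v x)" for x y
  proof -
    have "f x y = f y x" unfolding f_def by (simp add: inner_commute fun_eq_iff)
    thus ?thesis using f_sums[of x y] f_sums[of y x] sums_unique2 by metis
  qed
  have step: "(M *v x) \<bullet> (P *v (M *v x)) = x \<bullet> (P *v x) - x \<bullet> x" for x
  proof -
    have "f (M *v x) (M *v x) = (\<lambda>k. f x x (Suc k))"
      unfolding f_def
      by (simp add: fun_eq_iff matrix_vector_mul_assoc matpow_Suc_right del: matpow.simps(2))
    hence "f x x sums ((M *v x) \<bullet> (P *v (M *v x)) + f x x 0)"
      using f_sums[of "M *v x" "M *v x"] by (simp add: sums_Suc_iff)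
    moreover have "f x x 0 = x \<bullet> x" unfolding f_def by simp
    ultimately show ?thesis using f_sums[of x x] sums_unique2 by fastforce
  qed
  have "x \<bullet> x \<le> x \<bullet> (P *v x)" for x
  proof -
    have "0 \<le> (M *v x) \<bullet> (P *v (M *v x))"
      using sums_le[OF _ sums_zero f_sums[of "M *v x" "M *v x"]] unfolding f_def by simp
    thus ?thesis using step[of x] by simp
  qed
  with sym step that show ?thesis by blast
qed

text \<open>An enumeration of a finite index type by \<open>{0..<CARD('m)}\<close> transfers matrices to
  Jordan_Normal_Form, where spectral radius bounds for matrix powers are available.\<close>

definition idx :: "'m::finite \<Rightarrow> nat" where
  "idx = (SOME h. bij_betw h (UNIV :: 'm set) {0..<CARD('m)})"

definition unidx :: "nat \<Rightarrow> 'm::finite" where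
  "unidx = inv_into UNIV idx"

lemma idx_bij: "bij_betw (idx :: 'm::finite \<Rightarrow> nat) UNIV {0..<CARD('m)}"
proof -
  have "\<exists>h. bij_betw h (UNIV :: 'm set) {0..<CARD('m)}"
    by (rule ex_bij_betw_finite_nat) simp
  thus ?thesis unfolding idx_def by (rule someI_ex)
qed

lemma unidx_bij: "bij_betw (unidx :: nat \<Rightarrow> 'm::finite) {0..<CARD('m)} UNIV"
  unfolding unidx_def using bij_betw_inv_into[OF idx_bij] .

lemma unidx_idx [simp]: "unidx (idx a) = a"
  unfolding unidx_def using idx_bij bij_betw_imp_inj_on inv_into_f_f by (metis UNIV_I)

lemma idx_unidx [simp]: "l < CARD('m::finite) \<Longrightarrow> idx (unidx l :: 'm) = l"
  unfolding unidx_def using idx_bij[where 'm='m] by (simp add: bij_betw_def f_inv_into_f)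

lemma idx_less [simp]: "idx (a :: 'm::finite) < CARD('m)"
  using idx_bij[where 'm='m] unfolding bij_betw_def by auto

lemma sum_unidx: "(\<Sum>l\<in>{0..<CARD('m::finite)}. g (unidx l :: 'm)) = (\<Sum>a\<in>UNIV. g a)"
  by (rule sum.reindex_bij_betw[OF unidx_bij])

definition jnf_of :: "real^'m::finite^'m \<Rightarrow> complex Matrix.mat" where
  "jnf_of M = Matrix.mat CARD('m) CARD('m) (\<lambda>(i, j). complex_of_real (M $ unidx i $ unidx j))"

definition jnf_vec :: "complex^'m::finite \<Rightarrow> complex Matrix.vec" where
  "jnf_vec v = Matrix.vec CARD('m) (\<lambda>l. v $ unidx l)"

lemma dim_jnf_of [simp]:
  "dim_row (jnf_of (M :: real^'m::finite^'m)) = CARD('m)" "dim_col (jnf_of M) = CARD('m)"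
  by (simp_all add: jnf_of_def)

lemma jnf_of_carrier: "jnf_of (M :: real^'m::finite^'m) \<in> carrier_mat CARD('m) CARD('m)"
  unfolding jnf_of_def by simp

lemma jnf_of_mult: "jnf_of (A ** B) = jnf_of A * jnf_of B"
proof (rule eq_matI)
  fix i j assume "i < dim_row (jnf_of A * jnf_of B)" "j < dim_col (jnf_of A * jnf_of B)"
  hence "i < CARD('a)" "j < CARD('a)" by (simp_all add: jnf_of_def)
  thus "jnf_of (A ** B) $$ (i, j) = (jnf_of A * jnf_of B) $$ (i, j)"
    by (simp add: jnf_of_def scalar_prod_def matrix_matrix_mult_def flip: sum_unidx)
qed (simp_all add: jnf_of_def)

lemma jnf_of_mat_1: "jnf_of (mat 1 :: real^'m::finite^'m) = 1\<^sub>m CARD('m)"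
proof (rule eq_matI)
  fix i j assume "i < dim_row (1\<^sub>m CARD('m))" "j < dim_col (1\<^sub>m CARD('m))"
  hence i: "i < CARD('m)" and j: "j < CARD('m)" by auto
  hence "(unidx i :: 'm) = unidx j \<longleftrightarrow> i = j" by (metis idx_unidx)
  thus "jnf_of (mat 1 :: real^'m^'m) $$ (i, j) = 1\<^sub>m CARD('m) $$ (i, j)"
    using i j by (simp add: jnf_of_def Finite_Cartesian_Product.mat_def)
qed (simp_all add: jnf_of_def)

lemma jnf_of_matpow: "jnf_of (matpow M k) = jnf_of M ^\<^sub>m k"
  by (induction k) (simp_all add: jnf_of_mat_1 jnf_of_mult matpow_Suc_right del: matpow.simps(2))

lemma jnf_vec_eq_iff: "jnf_vec v = jnf_vec w \<longleftrightarrow> v = w"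
proof
  assume eq: "jnf_vec v = jnf_vec w"
  have "v $ a = w $ a" for a
    using arg_cong[OF eq, of "\<lambda>u. Matrix.vec_index u (idx a)"] by (simp add: jnf_vec_def)
  thus "v = w" by (simp add: Finite_Cartesian_Product.vec_eq_iff)
qed simp

lemma jnf_vec_0: "jnf_vec (0 :: complex^'m::finite) = 0\<^sub>v CARD('m)"
  by (simp add: jnf_vec_def zero_vec_def)

lemma jnf_vec_carrier: "jnf_vec (v :: complex^'m::finite) \<in> carrier_vec CARD('m)"
  by (simp add: jnf_vec_def)

lemma jnf_vec_of_carrier:
  assumes "u \<in> carrier_vec CARD('m::finite)"
  shows "u = jnf_vec (\<chi> a :: 'm. Matrix.vec_index u (idx a))"
  using assms by (auto simp: jnf_vec_def)

lemma jnf_vec_scale: "jnf_vec (z *s v) = z \<cdot>\<^sub>v jnf_vec v"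
  by (auto simp: jnf_vec_def)

lemma jnf_of_mult_jnf_vec: "jnf_of M *\<^sub>v jnf_vec v = jnf_vec (cmat M *v v)"
proof (rule eq_vecI)
  fix l assume "l < dim_vec (jnf_vec (cmat M *v v))"
  hence "l < CARD('a)" by (simp add: jnf_vec_def)
  thus "Matrix.vec_index (jnf_of M *\<^sub>v jnf_vec v) l = Matrix.vec_index (jnf_vec (cmat M *v v)) l"
    by (simp add: jnf_of_def jnf_vec_def scalar_prod_def matrix_vector_mult_def cmat_def flip: sum_unidx)
qed (simp add: jnf_of_def jnf_vec_def)

lemma eigenvalue_jnf_of_iff:
  fixes M :: "real^'m::finite^'m"
  shows "eigenvalue (jnf_of M) z \<longleftrightarrow> (\<exists>v. v \<noteq> 0 \<and> cmat M *v v = z *s v)"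
proof
  assume "eigenvalue (jnf_of M) z"
  then obtain u where u: "u \<in> carrier_vec CARD('m)" "u \<noteq> 0\<^sub>v CARD('m)" "jnf_of M *\<^sub>v u = z \<cdot>\<^sub>v u"
    unfolding eigenvalue_def eigenvector_def by auto
  define v where "v = (\<chi> a :: 'm. Matrix.vec_index u (idx a))"
  have "u = jnf_vec v" unfolding v_def by (rule jnf_vec_of_carrier[OF u(1)])
  with u show "\<exists>v. v \<noteq> 0 \<and> cmat M *v v = z *s v"
    by (metis jnf_vec_0 jnf_vec_eq_iff jnf_of_mult_jnf_vec jnf_vec_scale)
next
  assume "\<exists>v. v \<noteq> 0 \<and> cmat M *v v = z *s v"
  then obtain v where "v \<noteq> 0" "cmat M *v v = z *s v" by blast
  hence "eigenvector (jnf_of M) (jnf_vec v) z"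
    unfolding eigenvector_def
    by (simp add: jnf_vec_carrier jnf_of_mult_jnf_vec jnf_vec_scale jnf_vec_eq_iff flip: jnf_vec_0)
  thus "eigenvalue (jnf_of M) z" unfolding eigenvalue_def by blast
qed

lemma spectral_radius_jnf_of_less_1:
  fixes M :: "real^'m::finite^'m"
  assumes "schur_stable M"
  shows "spectral_radius (jnf_of M) < 1"
proof -
  have "spectral_radius (jnf_of M) \<in> norm ` Collect (eigenvalue (jnf_of M))"
    using spectral_radius_mem_max(1)[OF jnf_of_carrier[of M] zero_less_card_finite]
    unfolding spectrum_def .
  then obtain z where "eigenvalue (jnf_of M) z" and sr: "spectral_radius (jnf_of M) = norm z"
    by blast
  then obtain v where "v \<noteq> 0" "cmat M *v v = z *s v"
    unfolding eigenvalue_jnf_of_iff by blast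
  hence "norm z < 1" using assms unfolding schur_stable_def by blast
  thus ?thesis using sr by simp
qed

lemma spectral_radius_jnf_of_scaleR:
  fixes M :: "real^'m::finite^'m"
  assumes r: "0 < r"
  shows "r * spectral_radius (jnf_of ((1 / r) *\<^sub>R M)) \<le> spectral_radius (jnf_of M)"
proof -
  have "spectral_radius (jnf_of ((1 / r) *\<^sub>R M))
      \<in> norm ` Collect (eigenvalue (jnf_of ((1 / r) *\<^sub>R M)))"
    using spectral_radius_mem_max(1)[OF jnf_of_carrier zero_less_card_finite]
    unfolding spectrum_def .
  then obtain w where "eigenvalue (jnf_of ((1 / r) *\<^sub>R M)) w"
    and sr_w: "spectral_radius (jnf_of ((1 / r) *\<^sub>R M)) = norm w"
    by blast
  then obtain v where "v \<noteq> 0" and "cmat ((1 / r) *\<^sub>R M) *v v = w *s v"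
    unfolding eigenvalue_jnf_of_iff by blast
  hence "complex_of_real r *s (complex_of_real (1 / r) *s (cmat M *v v))
      = complex_of_real r *s (w *s v)"
    unfolding cmat_scaleR_mult by simp
  hence "cmat M *v v = (complex_of_real r * w) *s v"
    using r by (simp add: vector_smult_assoc)
  with \<open>v \<noteq> 0\<close> have "eigenvalue (jnf_of M) (complex_of_real r * w)"
    unfolding eigenvalue_jnf_of_iff by blast
  hence "norm (complex_of_real r * w) \<le> spectral_radius (jnf_of M)"
    using spectral_radius_mem_max(2)[OF jnf_of_carrier[of M] zero_less_card_finite]
    unfolding spectrum_def by blast
  thus ?thesis using r sr_w by (simp add: norm_mult)
qed

\<comment> \<open>Rescaling by \<open>r\<close> strictly between the spectral radius and \<open>1\<close> makes the spectral radius \<open>< 1\<close>,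
  so the powers of the rescaled matrix stay bounded.\<close>
lemma schur_stable_geometric_decay:
  fixes M :: "real^'m::finite^'m"
  assumes stable: "schur_stable M"
  obtains c r where "0 < r" "r < 1" "\<And>k i j. \<bar>matpow M k $ i $ j\<bar> \<le> c * r ^ k"
proof -
  define sr where "sr = spectral_radius (jnf_of M)"
  define r where "r = (1 + sr) / 2"
  have "sr < 1" unfolding sr_def by (rule spectral_radius_jnf_of_less_1[OF stable])
  moreover have "0 \<le> sr"
    using spectral_radius_mem_max(1)[OF jnf_of_carrier[of M] zero_less_card_finite]
    unfolding sr_def by (metis imageE norm_ge_zero)
  ultimately have r: "0 < r" "r < 1" "sr < r" unfolding r_def by auto
  define M1 where "M1 = (1 / r) *\<^sub>R M"
  have "r * spectral_radius (jnf_of M1) < r * 1"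
    using spectral_radius_jnf_of_scaleR[OF r(1), of M] r(3) unfolding M1_def sr_def by simp
  hence "spectral_radius (jnf_of M1) < 1" using r(1) by (simp only: mult_less_cancel_left_pos)
  then obtain c where c: "\<And>k. norm_bound (jnf_of M1 ^\<^sub>m k) c"
    using spectral_radius_jnf_norm_bound_less_1_upper_triangular[OF jnf_of_carrier] by blast
  have "\<bar>matpow M k $ i $ j\<bar> \<le> c * r ^ k" for k i j
  proof -
    have "norm (jnf_of (matpow M1 k) $$ (idx i, idx j)) \<le> c"
      using c[of k] unfolding norm_bound_def jnf_of_matpow[symmetric] by simp
    hence "\<bar>matpow M1 k $ i $ j\<bar> \<le> c" by (simp add: jnf_of_def)
    hence "(1 / r) ^ k * \<bar>matpow M k $ i $ j\<bar> \<le> c"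
      using r unfolding M1_def matpow_scaleR by (simp add: abs_mult)
    thus ?thesis using r by (simp add: power_one_over field_simps)
  qed
  with r that show ?thesis by blast
qed

lemma schur_stable_lyapunov_matrix:
  fixes M :: "real^'m::finite^'m"
  assumes "schur_stable M"
  obtains P where "\<And>x y. x \<bullet> (P *v y) = y \<bullet> (P *v x)" and "\<And>x. x \<bullet> x \<le> x \<bullet> (P *v x)"
    and "\<And>x. (M *v x) \<bullet> (P *v (M *v x)) = x \<bullet> (P *v x) - x \<bullet> x"
  using schur_stable_geometric_decay[OF assms] lyapunov_matrix_of_geometric_decay by metis

section \<open>The proportional-integral block matrix\<close>

definition block_vec :: "'a^'n \<Rightarrow> 'a^'p \<Rightarrow> 'a^('n + 'p)" where
  "block_vec x y = (\<chi> i. case i of Inl a \<Rightarrow> x $ a | Inr b \<Rightarrow> y $ b)"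

lemma block_vec_exhaust:
  obtains x y where "v = block_vec x y"
proof
  show "v = block_vec (\<chi> a. v $ Inl a) (\<chi> b. v $ Inr b)"
    by (simp add: block_vec_def Finite_Cartesian_Product.vec_eq_iff split: sum.split)
qed

lemma block_vec_eq_iff: "block_vec x y = block_vec x' y' \<longleftrightarrow> x = x' \<and> y = y'"
proof
  assume eq: "block_vec x y = block_vec x' y'"
  have "x $ a = x' $ a" for a
    using arg_cong[OF eq, of "\<lambda>v. v $ Inl a"] by (simp add: block_vec_def)
  moreover have "y $ b = y' $ b" for b
    using arg_cong[OF eq, of "\<lambda>v. v $ Inr b"] by (simp add: block_vec_def)
  ultimately show "x = x' \<and> y = y'" by (simp add: Finite_Cartesian_Product.vec_eq_iff)
qed simp

lemma block_vec_eq_0_iff: "block_vec x y = 0 \<longleftrightarrow> x = 0 \<and> y = 0"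
proof -
  have "block_vec 0 0 = 0"
    by (simp add: block_vec_def Finite_Cartesian_Product.vec_eq_iff split: sum.split)
  thus ?thesis by (metis block_vec_eq_iff)
qed

lemma scale_block_vec: "c *s block_vec x y = block_vec (c *s x) (c *s y)"
  by (simp add: block_vec_def Finite_Cartesian_Product.vec_eq_iff split: sum.split)

lemma sum_UNIV_sum:
  "(\<Sum>i\<in>(UNIV :: ('a::finite + 'b::finite) set). g i) = (\<Sum>a\<in>UNIV. g (Inl a)) + (\<Sum>b\<in>UNIV. g (Inr b))"
  using sum.Plus[of UNIV UNIV g] by (simp add: comp_def)

lemma inner_block_vec: "block_vec x y \<bullet> block_vec x' y' = x \<bullet> x' + y \<bullet> (y' :: real^'p)"
  by (simp add: block_vec_def inner_vec_def sum_UNIV_sum)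

lemma inner_block_vec_left_upper:
  fixes P :: "real^('n::finite + 'p::finite)^('n + 'p)"
  shows "block_vec u 0 \<bullet> (P *v block_vec w 0) = u \<bullet> ((\<chi> a b. P $ Inl a $ Inl b) *v w)"
  by (simp add: block_vec_def inner_vec_def matrix_vector_mult_def sum_UNIV_sum)

lemma pi_block_mult_block_vec:
  "pi_block A C L F *v block_vec x y = block_vec ((A - L ** C) *v x + F *v y) (y - C *v x)"
  by (simp add: Finite_Cartesian_Product.vec_eq_iff block_vec_def pi_block_def matrix_vector_mult_def
      sum_UNIV_sum Finite_Cartesian_Product.mat_def sum_negf if_distrib if_distribR cong: if_cong
      split: sum.split)

lemma cmat_pi_block_mult_block_vec:
  "cmat (pi_block A C L F) *v block_vec x y
     = block_vec (cmat (A - L ** C) *v x + cmat F *v y) (y - cmat C *v x)"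
  by (simp add: Finite_Cartesian_Product.vec_eq_iff block_vec_def pi_block_def cmat_def
      matrix_vector_mult_def sum_UNIV_sum Finite_Cartesian_Product.mat_def sum_negf
      if_distrib if_distribR cong: if_cong split: sum.split)

lemma shifted_eigenvector:
  fixes E :: "'a::field^'n^'n" and R :: "'a^'p^'n" and C :: "'a^'n^'p"
  assumes CR: "C ** R = mat 1"
    and Ex: "E *v x - (E ** R) *v y = z *s x" and Cx: "y - C *v x = z *s y"
  shows "(E + R ** C) *v (x - R *v y) = z *s (x - R *v y)"
proof -
  have Cu: "C *v (x - R *v y) = - (z *s y)"
  proof -
    have "C *v (x - R *v y) = C *v x - y"
      using CR by (simp add: matrix_vector_mult_diff_distrib matrix_vector_mul_assoc)
    also have "\<dots> = - (z *s y)"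
      using Cx by (metis minus_diff_eq)
    finally show ?thesis .
  qed
  have "(E + R ** C) *v (x - R *v y) = E *v (x - R *v y) + R *v (C *v (x - R *v y))"
    by (simp add: matrix_vector_mult_add_rdistrib matrix_vector_mul_assoc)
  also have "\<dots> = z *s x - z *s (R *v y)"
    using Ex unfolding Cu
    by (simp add: matrix_vector_mult_diff_distrib matrix_vector_mul_assoc matrix_vector_mult_neg
        vector_scalar_commute)
  also have "\<dots> = z *s (x - R *v y)"
    by (simp add: vector_ssub_ldistrib)
  finally show ?thesis .
qed

lemma schur_stable_pi_block_of_right_inverse:
  fixes A :: "real^'n^'n" and C :: "real^'n^'p" and K R :: "real^'p^'n"
  assumes CR: "C ** R = mat 1" and stable: "schur_stable (A + K ** C)"
  shows "schur_stable (pi_block A C (R - K) (- ((A - (R - K) ** C) ** R)))"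
  unfolding schur_stable_def
proof (intro allI impI)
  fix z :: complex
  let ?L = "R - K"
  assume "\<exists>v. v \<noteq> 0 \<and> cmat (pi_block A C ?L (- ((A - ?L ** C) ** R))) *v v = z *s v"
  then obtain x y where xy: "block_vec x y \<noteq> 0"
    and ev: "cmat (pi_block A C ?L (- ((A - ?L ** C) ** R))) *v block_vec x y = z *s block_vec x y"
    by (metis block_vec_exhaust)
  define E Rc Cc where "E = cmat (A - ?L ** C)" and "Rc = cmat R" and "Cc = cmat C"
  have "cmat (- ((A - ?L ** C) ** R)) = - (E ** Rc)"
    unfolding E_def Rc_def by (simp add: cmat_uminus cmat_matrix_mult)
  with ev have Ex: "E *v x - (E ** Rc) *v y = z *s x" and Cx: "y - Cc *v x = z *s y"
    unfolding cmat_pi_block_mult_block_vec scale_block_vec block_vec_eq_iff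
    by (simp_all add: E_def Cc_def matrix_neg_vector_mult)
  have CRc: "Cc ** Rc = mat 1"
    unfolding Cc_def Rc_def using CR by (metis cmat_matrix_mult cmat_mat_1)
  have AK: "cmat (A + K ** C) = E + Rc ** Cc"
  proof -
    have "A + K ** C = (A - ?L ** C) + R ** C" by (simp add: matrix_diff_rdistrib)
    thus ?thesis unfolding E_def Rc_def Cc_def by (metis cmat_add cmat_matrix_mult)
  qed
  define u where "u = x - Rc *v y"
  have eig: "cmat (A + K ** C) *v u = z *s u"
    unfolding AK u_def by (rule shifted_eigenvector[OF CRc Ex Cx])
  show "norm z < 1"
  proof (cases "u = 0")
    case False
    thus ?thesis using stable eig unfolding schur_stable_def by blast
  next
    case True
    hence "x = Rc *v y" unfolding u_def by simp
    hence "Cc *v x = y" using CRc by (simp add: matrix_vector_mul_assoc)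
    hence "z *s y = 0" using Cx by simp
    moreover have "y \<noteq> 0" using xy \<open>x = Rc *v y\<close> by (auto simp: block_vec_eq_0_iff)
    ultimately show ?thesis by simp
  qed
qed

lemma detectable_of_schur_stable_pi_block:
  fixes A :: "real^'n^'n" and C :: "real^'n^'p" and L F :: "real^'p^'n"
  assumes rank: "rank C = CARD('p)" and stable: "schur_stable (pi_block A C L F)"
  shows "detectable A C"
proof -
  obtain P where sym: "\<And>x y. x \<bullet> (P *v y) = y \<bullet> (P *v x)" and ge: "\<And>x. x \<bullet> x \<le> x \<bullet> (P *v x)"
    and step: "\<And>x. (pi_block A C L F *v x) \<bullet> (P *v (pi_block A C L F *v x)) = x \<bullet> (P *v x) - x \<bullet> x"
    using schur_stable_lyapunov_matrix[OF stable] by blast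
  define P11 :: "real^'n^'n" where "P11 = (\<chi> a b. P $ Inl a $ Inl b)"
  have P11: "u \<bullet> (P11 *v w) = block_vec u (0 :: real^'p) \<bullet> (P *v block_vec w 0)" for u w
    unfolding P11_def by (rule inner_block_vec_left_upper[symmetric])
  show ?thesis
  proof (rule detectable_of_lyapunov_on_kernel[OF rank, of P11])
    show "x \<bullet> (P11 *v y) = y \<bullet> (P11 *v x)" for x y
      unfolding P11 by (rule sym)
    show "x \<bullet> x \<le> x \<bullet> (P11 *v x)" for x
      using ge[of "block_vec x 0"] unfolding P11 by (simp add: inner_block_vec)
    show "(A *v w) \<bullet> (P11 *v (A *v w)) \<le> w \<bullet> (P11 *v w) - w \<bullet> w" if "C *v w = 0" for w
    proof -
      have "pi_block A C L F *v block_vec w 0 = block_vec (A *v w) 0"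
        using that by (simp add: pi_block_mult_block_vec matrix_vector_mult_diff_rdistrib
            flip: matrix_vector_mul_assoc)
      thus ?thesis using step[of "block_vec w 0"] unfolding P11 by (simp add: inner_block_vec)
    qed
  qed
qed

theorem theorem1:
  fixes A :: "real^'n^'n" and C :: "real^'n^'p"
  assumes "C \<noteq> 0" and "rank C = CARD('p)"
  shows "(\<exists>L F :: real^'p^'n. schur_stable (pi_block A C L F)) \<longleftrightarrow> detectable A C"
proof
  assume "\<exists>L F :: real^'p^'n. schur_stable (pi_block A C L F)"
  thus "detectable A C"
    using detectable_of_schur_stable_pi_block[OF assms(2)] by blast
next
  assume "detectable A C"
  then obtain K :: "real^'p^'n" where "schur_stable (A + K ** C)"
    unfolding detectable_def by blast
  moreover obtain R where "C ** R = mat 1"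
    using full_row_rank_right_inverse[OF assms(2)] .
  ultimately show "\<exists>L F :: real^'p^'n. schur_stable (pi_block A C L F)"
    using schur_stable_pi_block_of_right_inverse by blast
qed

end
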